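(* If $\boldsymbol\mu$ is an invariant probability measure of the Markov transition semigroup $[\Pi_t,t\ge0]$, then $\boldsymbol\mu(\{0\}\times\mathbb R)=0$.
   Context: Fix $\delta\in\mathbb R$, $\gamma>0$, $D>0$. $[\Pi_t,t\ge0]$ is the Markov transition semigroup on $\mathbb R^2$ of the unique global strong solution of (N): $d\xi=-\xi^4\eta\,dt$, $d\eta=(\delta\xi+2\xi^3\eta^2-\gamma\xi^4\eta)dt+\sqrt{2D}\,dW$, with $W$ a standard Wiener process. *)

theory Defs
  imports "HOL-Probability.Probability"
begin

definition std_wiener :: "'a measure \<Rightarrow> (real \<Rightarrow> 'a \<Rightarrow> real) \<Rightarrow> bool" where
  "std_wiener M W \<longleftrightarrow>
     prob_space M \<and>
     (\<forall>t\<ge>0. W t \<in> borel_measurable M) \<and>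
     (\<forall>\<omega>\<in>space M. W 0 \<omega> = 0 \<and> continuous_on {0..} (\<lambda>t. W t \<omega>)) \<and>
     (\<forall>s t. 0 \<le> s \<and> s < t \<longrightarrow>
        distributed M lborel (\<lambda>\<omega>. W t \<omega> - W s \<omega>) (\<lambda>x. ennreal (normal_density 0 (sqrt (t - s)) x))) \<and>
     (\<forall>(ts :: nat \<Rightarrow> real) n. 0 \<le> ts 0 \<and> (\<forall>i<n. ts i \<le> ts (Suc i)) \<longrightarrow>
        prob_space.indep_vars M (\<lambda>_. borel) (\<lambda>i \<omega>. W (ts (Suc i)) \<omega> - W (ts i) \<omega>) {..<n})"

definition solves_N ::
  "real \<Rightarrow> real \<Rightarrow> real \<Rightarrow> 'a measure \<Rightarrow> (real \<Rightarrow> 'a \<Rightarrow> real)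
     \<Rightarrow> real \<times> real \<Rightarrow> (real \<Rightarrow> 'a \<Rightarrow> real \<times> real) \<Rightarrow> bool" where
  "solves_N \<delta> \<gamma> D M W x Y \<longleftrightarrow>
     (\<forall>t\<ge>0. Y t \<in> borel_measurable M) \<and>
     (AE \<omega> in M.
        Y 0 \<omega> = x \<and>
        continuous_on {0..} (\<lambda>t. Y t \<omega>) \<and>
        (\<forall>t\<ge>0.
           fst (Y t \<omega>) = fst x
              - integral {0..t} (\<lambda>s. fst (Y s \<omega>) ^ 4 * snd (Y s \<omega>)) \<and>
           snd (Y t \<omega>) = snd x
              + integral {0..t} (\<lambda>s. \<delta> * fst (Y s \<omega>) + 2 * fst (Y s \<omega>) ^ 3 * snd (Y s \<omega>) ^ 2
                                    - \<gamma> * fst (Y s \<omega>) ^ 4 * snd (Y s \<omega>))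
              + sqrt (2 * D) * W t \<omega>))"

text \<open>Transition semigroup (as kernels): \<Pi>_t(x, A) = P(X^x_t \<in> A).\<close>
definition trans_kernel ::
  "'a measure \<Rightarrow> (real \<times> real \<Rightarrow> real \<Rightarrow> 'a \<Rightarrow> real \<times> real) \<Rightarrow> real \<Rightarrow> real \<times> real
     \<Rightarrow> (real \<times> real) set \<Rightarrow> ennreal" where
  "trans_kernel M X t x A = emeasure M {\<omega> \<in> space M. X x t \<omega> \<in> A}"

definition invariant_prob ::
  "'a measure \<Rightarrow> (real \<times> real \<Rightarrow> real \<Rightarrow> 'a \<Rightarrow> real \<times> real) \<Rightarrow> (real \<times> real) measure \<Rightarrow> bool" where
  "invariant_prob M X \<mu> \<longleftrightarrow>
     prob_space \<mu> \<and> sets \<mu> = sets borel \<and>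
     (\<forall>t\<ge>0. \<forall>A\<in>sets borel. (\<integral>\<^sup>+ x. trans_kernel M X t x A \<partial>\<mu>) = emeasure \<mu> A)"

end

theory Submission
  imports Defs "HOL-Real_Asymp.Real_Asymp"
begin

text \<open>On the axis \<open>\<xi> = 0\<close> the equation for \<open>\<xi>\<close> is linear in \<open>\<xi>\<close>, so by Gronwall a solution
  started on the axis stays there and is \<open>(0, y + \<surd>(2D) W\<^sub>t)\<close>. The axis is therefore absorbing,
  while the Gaussian spreading of \<open>W\<^sub>t\<close> makes the probability of being in a segment
  \<open>{0} \<times> [-R, R]\<close> at most \<open>2R / \<surd>(2Dt)\<close>. Invariance of \<open>\<mu>\<close> then bounds the \<open>\<mu>\<close>-mass of the
  segment by this quantity for every \<open>t\<close>, so it vanishes, and the axis is a countable union of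
  such segments.\<close>

lemma nn_integral_add_le:
  assumes "h \<in> borel_measurable M"
  shows "integral\<^sup>N M f + integral\<^sup>N M h \<le> (\<integral>\<^sup>+ x. f x + h x \<partial>M)"
proof -
  have "{g. simple_function M g \<and> g \<le> f} \<noteq> {}"
    by (auto simp: le_fun_def intro!: exI[of _ "\<lambda>_. 0"])
  then have "integral\<^sup>N M f + integral\<^sup>N M h
      = (SUP g \<in> {g. simple_function M g \<and> g \<le> f}. integral\<^sup>S M g + integral\<^sup>N M h)"
    unfolding nn_integral_def[of M f] by (rule ennreal_SUP_add_left[symmetric])
  also have "\<dots> \<le> (\<integral>\<^sup>+ x. f x + h x \<partial>M)"
  proof (rule SUP_least)
    fix g assume g: "g \<in> {g. simple_function M g \<and> g \<le> f}"
    then have "integral\<^sup>S M g + integral\<^sup>N M h = (\<integral>\<^sup>+ x. g x + h x \<partial>M)"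
      using assms by (simp add: nn_integral_eq_simple_integral nn_integral_add
          borel_measurable_simple_function)
    also have "\<dots> \<le> (\<integral>\<^sup>+ x. f x + h x \<partial>M)"
      using g by (intro nn_integral_mono) (auto simp: le_fun_def add_right_mono)
    finally show "integral\<^sup>S M g + integral\<^sup>N M h \<le> (\<integral>\<^sup>+ x. f x + h x \<partial>M)" .
  qed
  finally show ?thesis .
qed

lemma homogeneous_linear_integral_equation_zero:
  fixes \<xi> a :: "real \<Rightarrow> real"
  assumes "T \<ge> 0" and \<xi>: "continuous_on {0..T} \<xi>" and a: "continuous_on {0..T} a"
    and eq: "\<And>t. t \<in> {0..T} \<Longrightarrow> \<xi> t = integral {0..t} (\<lambda>s. a s * \<xi> s)"
  shows "\<xi> T = 0"
proof -
  obtain K where K: "\<And>s. s \<in> {0..T} \<Longrightarrow> \<bar>2 * a s\<bar> \<le> K"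
    using compact_imp_bounded[OF compact_continuous_image[of _ "\<lambda>s. 2 * a s", OF _ compact_Icc]] a
    unfolding bounded_iff by (force intro: continuous_intros)
  define g where "g t = exp (- K * t) * \<xi> t ^ 2" for t
  text \<open>Gronwall: \<open>g\<close> is nonincreasing because \<open>(\<xi>\<^sup>2)' = 2 a \<xi>\<^sup>2 \<le> K \<xi>\<^sup>2\<close>.\<close>
  have "g T \<le> g 0"
  proof (rule DERIV_nonpos_imp_decreasing_open[OF \<open>T \<ge> 0\<close>])
    fix x assume x: "0 < x" "x < T"
    have "((\<lambda>u. integral {0..u} (\<lambda>s. a s * \<xi> s)) has_real_derivative a x * \<xi> x) (at x)"
      using integral_has_vector_derivative[of 0 T "\<lambda>s. a s * \<xi> s" x] x \<xi> a
      by (auto intro: continuous_intros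
          simp: at_within_Icc_at has_real_derivative_iff_has_vector_derivative)
    then have d\<xi>: "(\<xi> has_real_derivative a x * \<xi> x) (at x)"
      by (rule has_field_derivative_transform_within_open[where S = "{0<..<T}"])
        (use x eq in auto)
    have "(g has_real_derivative exp (- K * x) * \<xi> x ^ 2 * (2 * a x - K)) (at x)"
      unfolding g_def
      by (rule derivative_eq_intros d\<xi> refl | simp add: algebra_simps power2_eq_square)+
    moreover have "exp (- K * x) * \<xi> x ^ 2 * (2 * a x - K) \<le> 0"
      using K[of x] x by (intro mult_nonneg_nonpos) auto
    ultimately show "\<exists>y. (g has_real_derivative y) (at x) \<and> y \<le> 0" by blast
  qed (unfold g_def, intro continuous_intros \<xi>)
  moreover have "g 0 = 0" using eq[of 0] \<open>T \<ge> 0\<close> by (simp add: g_def)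
  ultimately show ?thesis by (simp add: g_def mult_le_0_iff)
qed

lemma normal_density_le:
  fixes \<sigma> :: real
  assumes "\<sigma> > 0"
  shows "normal_density \<mu> \<sigma> x \<le> 1 / \<sigma>"
proof -
  have "\<sigma>\<^sup>2 \<le> 2 * pi * \<sigma>\<^sup>2"
    using pi_gt3 by (simp add: mult_le_cancel_right1)
  then have "sqrt (\<sigma>\<^sup>2) \<le> sqrt (2 * pi * \<sigma>\<^sup>2)"
    by (rule real_sqrt_le_mono)
  then have "1 / sqrt (2 * pi * \<sigma>\<^sup>2) \<le> 1 / \<sigma>"
    using assms by (intro divide_left_mono) auto
  moreover have "exp (- (x - \<mu>)\<^sup>2 / (2 * \<sigma>\<^sup>2)) \<le> 1" by simp
  ultimately have "1 / sqrt (2 * pi * \<sigma>\<^sup>2) * exp (- (x - \<mu>)\<^sup>2 / (2 * \<sigma>\<^sup>2)) \<le> 1 / \<sigma> * 1"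
    using assms by (intro mult_mono) auto
  then show ?thesis by (simp add: normal_density_def)
qed

lemma std_wiener_interval_prob_le:
  assumes W: "std_wiener M W" and "t > 0" "c > 0" "R \<ge> 0"
  shows "emeasure M {\<omega> \<in> space M. \<bar>a + c * W t \<omega>\<bar> \<le> R} \<le> ennreal (2 * R / (c * sqrt t))"
proof -
  have dist: "distributed M lborel (\<lambda>\<omega>. W t \<omega> - W 0 \<omega>)
      (\<lambda>x. ennreal (normal_density 0 (sqrt t) x))"
    using W \<open>t > 0\<close> unfolding std_wiener_def by force
  have W0: "W 0 \<omega> = 0" if "\<omega> \<in> space M" for \<omega>
    using W that unfolding std_wiener_def by blast
  define B where "B = {(- R - a) / c .. (R - a) / c}"
  have "{\<omega> \<in> space M. \<bar>a + c * W t \<omega>\<bar> \<le> R}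
      = (\<lambda>\<omega>. W t \<omega> - W 0 \<omega>) -` B \<inter> space M"
    using \<open>c > 0\<close> W0 by (auto simp: B_def field_simps abs_le_iff)
  then have "emeasure M {\<omega> \<in> space M. \<bar>a + c * W t \<omega>\<bar> \<le> R}
      = (\<integral>\<^sup>+x. ennreal (normal_density 0 (sqrt t) x) * indicator B x \<partial>lborel)"
    using distributed_emeasure[OF dist] by (simp add: B_def)
  also have "\<dots> \<le> (\<integral>\<^sup>+x. ennreal (1 / sqrt t) * indicator B x \<partial>lborel)"
    using normal_density_le[of "sqrt t"] \<open>t > 0\<close>
    by (intro nn_integral_mono) (auto simp: indicator_def intro: ennreal_leI)
  also have "\<dots> = ennreal (1 / sqrt t) * ennreal (2 * R / c)"
    using \<open>c > 0\<close> \<open>R \<ge> 0\<close>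
    by (simp add: B_def nn_integral_cmult_indicator divide_right_mono diff_divide_distrib)
  also have "\<dots> = ennreal (2 * R / (c * sqrt t))"
    using \<open>t > 0\<close> \<open>c > 0\<close> \<open>R \<ge> 0\<close> by (simp flip: ennreal_mult)
  finally show ?thesis .
qed

lemma solves_N_from_axis:
  assumes "solves_N \<delta> \<gamma> D M W (0, y) Y" and "t \<ge> 0"
  shows "AE \<omega> in M. Y t \<omega> = (0, y + sqrt (2 * D) * W t \<omega>)"
  using assms(1) unfolding solves_N_def
proof (elim conjE AE_mp, intro AE_I2 impI)
  fix \<omega>
  define \<xi> where "\<xi> s = fst (Y s \<omega>)" for s
  define \<eta> where "\<eta> s = snd (Y s \<omega>)" for s
  assume H: "Y 0 \<omega> = (0, y) \<and> continuous_on {0..} (\<lambda>t. Y t \<omega>) \<and>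
    (\<forall>t\<ge>0. fst (Y t \<omega>) = fst (0::real, y) - integral {0..t} (\<lambda>s. fst (Y s \<omega>) ^ 4 * snd (Y s \<omega>)) \<and>
      snd (Y t \<omega>) = snd (0::real, y)
        + integral {0..t} (\<lambda>s. \<delta> * fst (Y s \<omega>) + 2 * fst (Y s \<omega>) ^ 3 * snd (Y s \<omega>) ^ 2
                              - \<gamma> * fst (Y s \<omega>) ^ 4 * snd (Y s \<omega>))
        + sqrt (2 * D) * W t \<omega>)"
  have "continuous_on {0..s} (\<lambda>t. Y t \<omega>)" for s
    using H by (auto elim: continuous_on_subset)
  then have c\<xi>: "continuous_on {0..s} \<xi>" and c\<eta>: "continuous_on {0..s} \<eta>" for s
    unfolding \<xi>_def \<eta>_def by (auto intro: continuous_on_fst continuous_on_snd)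
  have eq\<xi>: "\<xi> t = integral {0..t} (\<lambda>s. - (\<xi> s ^ 3 * \<eta> s) * \<xi> s)" if "t \<ge> 0" for t
  proof -
    have "(\<lambda>s. - (\<xi> s ^ 3 * \<eta> s) * \<xi> s) = (\<lambda>s. - (\<xi> s ^ 4 * \<eta> s))"
      by (auto simp: fun_eq_iff power3_eq_cube power4_eq_xxxx)
    then show ?thesis
      using H that unfolding integral_neg by (simp add: \<xi>_def \<eta>_def)
  qed
  have \<xi>0: "\<xi> s = 0" if "s \<ge> 0" for s
    by (rule homogeneous_linear_integral_equation_zero[OF that c\<xi>, of "\<lambda>s. - (\<xi> s ^ 3 * \<eta> s)"])
      (use eq\<xi> in \<open>auto intro!: continuous_intros c\<xi> c\<eta>\<close>)
  have "integral {0..t} (\<lambda>s. \<delta> * \<xi> s + 2 * \<xi> s ^ 3 * \<eta> s ^ 2 - \<gamma> * \<xi> s ^ 4 * \<eta> s)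
      = integral {0..t} (\<lambda>_. 0)"
    by (rule integral_cong) (simp add: \<xi>0)
  then show "Y t \<omega> = (0, y + sqrt (2 * D) * W t \<omega>)"
    using H \<xi>0[OF \<open>t \<ge> 0\<close>] \<open>t \<ge> 0\<close> by (simp add: \<xi>_def \<eta>_def prod_eq_iff)
qed

text \<open>Invariance makes \<open>K(\<cdot>, L) \<ge> 1\<^sub>L\<close> and \<open>1\<^sub>L\<close> have the same integral, so \<open>K(\<cdot>, A)\<close> puts no
  mass off \<open>L\<close>. As \<open>K\<close> need not be measurable in \<open>x\<close>, this is phrased via superadditivity.\<close>
lemma invariant_kernel_absorbing_le:
  fixes K :: "'b \<Rightarrow> 'b set \<Rightarrow> ennreal"
  assumes "finite_measure \<mu>" "L \<in> sets \<mu>" "0 \<le> e" "e \<le> 1"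
    and mono: "\<And>x. K x A \<le> K x L"
    and absorbing: "\<And>x. x \<in> L \<Longrightarrow> K x L = 1"
    and small: "\<And>x. x \<in> L \<Longrightarrow> K x A \<le> ennreal e"
    and inv_A: "(\<integral>\<^sup>+x. K x A \<partial>\<mu>) = emeasure \<mu> A"
    and inv_L: "(\<integral>\<^sup>+x. K x L \<partial>\<mu>) = emeasure \<mu> L"
  shows "measure \<mu> A \<le> e * measure \<mu> L"
proof -
  interpret finite_measure \<mu> by fact
  define h where "h x = ennreal (1 - e) * indicator L x" for x
  have pointwise: "K x A + h x \<le> K x L" for x
  proof (cases "x \<in> L")
    case True
    then have "K x A + h x \<le> ennreal e + ennreal (1 - e)"
      using small by (simp add: h_def add_right_mono)
    also have "\<dots> = K x L" using True absorbing \<open>e \<le> 1\<close> \<open>0 \<le> e\<close> by (simp flip: ennreal_plus)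
    finally show ?thesis .
  qed (simp add: h_def mono)
  have "integral\<^sup>N \<mu> (\<lambda>x. K x A) + integral\<^sup>N \<mu> h \<le> (\<integral>\<^sup>+x. K x A + h x \<partial>\<mu>)"
    by (rule nn_integral_add_le) (use \<open>L \<in> sets \<mu>\<close> in \<open>simp add: h_def[abs_def]\<close>)
  also have "\<dots> \<le> emeasure \<mu> L"
    unfolding inv_L[symmetric] by (intro nn_integral_mono pointwise)
  finally have "emeasure \<mu> A + integral\<^sup>N \<mu> h \<le> emeasure \<mu> L"
    by (simp only: inv_A)
  moreover have "integral\<^sup>N \<mu> h = ennreal ((1 - e) * measure \<mu> L)"
    using \<open>L \<in> sets \<mu>\<close> \<open>e \<le> 1\<close>
    by (simp add: h_def[abs_def] nn_integral_cmult_indicator emeasure_eq_measure ennreal_mult)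
  ultimately have "measure \<mu> A + (1 - e) * measure \<mu> L \<le> measure \<mu> L"
    using \<open>e \<le> 1\<close> by (simp add: emeasure_eq_measure flip: ennreal_plus)
  then show ?thesis by (simp add: algebra_simps)
qed

lemma trans_kernel_from_axis:
  assumes "std_wiener M W" and "solves_N \<delta> \<gamma> D M W (0, y) (X (0, y))"
    and "t \<ge> 0" and [measurable]: "B \<in> sets borel"
  shows "trans_kernel M X t (0, y) B
    = emeasure M {\<omega> \<in> space M. (0, y + sqrt (2 * D) * W t \<omega>) \<in> B}"
proof -
  have [measurable]: "X (0, y) t \<in> borel_measurable M" "W t \<in> borel_measurable M"
    using assms unfolding std_wiener_def solves_N_def by auto
  show ?thesis
    unfolding trans_kernel_def using solves_N_from_axis[OF assms(2,3)]
    by (intro emeasure_Collect_eq_AE) (auto elim: AE_mp)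
qed

lemma trans_kernel_from_axis_segment_le:
  assumes "D > 0" and W: "std_wiener M W" and X: "solves_N \<delta> \<gamma> D M W (0, y) (X (0, y))"
    and "t > 0" and "R \<ge> 0"
  shows "trans_kernel M X t (0, y) ({0} \<times> {-R..R}) \<le> ennreal (2 * R / (sqrt (2 * D) * sqrt t))"
proof -
  have "trans_kernel M X t (0, y) ({0} \<times> {-R..R})
      = emeasure M {\<omega> \<in> space M. \<bar>y + sqrt (2 * D) * W t \<omega>\<bar> \<le> R}"
    using trans_kernel_from_axis[where X = X, OF W X, of t "{0} \<times> {-R..R}"] \<open>t > 0\<close>
    by (simp add: abs_le_iff closed_Times, intro arg_cong[where f = "emeasure M"] Collect_cong) auto
  also have "\<dots> \<le> ennreal (2 * R / (sqrt (2 * D) * sqrt t))"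
    using std_wiener_interval_prob_le[OF W \<open>t > 0\<close>] \<open>D > 0\<close> \<open>R \<ge> 0\<close> by simp
  finally show ?thesis .
qed

lemma invariant_prob_axis_segment_le:
  assumes "D > 0" and W: "std_wiener M W" and X: "\<And>x. solves_N \<delta> \<gamma> D M W x (X x)"
    and inv: "invariant_prob M X \<mu>" and "R \<ge> 0" and "t > 0"
    and le_1: "2 * R / (sqrt (2 * D) * sqrt t) \<le> 1"
  shows "measure \<mu> ({0} \<times> {-R..R}) \<le> 2 * R / (sqrt (2 * D) * sqrt t)"
proof -
  define L where "L = {0::real} \<times> (UNIV :: real set)"
  define A where "A = {0::real} \<times> {-R..R}"
  have borel [measurable]: "L \<in> sets borel" "A \<in> sets borel"
    unfolding L_def A_def by (auto intro!: borel_closed closed_Times)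
  interpret M: prob_space M using W unfolding std_wiener_def by blast
  interpret \<mu>: prob_space \<mu> using inv unfolding invariant_prob_def by blast
  have "measure \<mu> A \<le> 2 * R / (sqrt (2 * D) * sqrt t) * measure \<mu> L"
  proof (rule invariant_kernel_absorbing_le[where K = "\<lambda>x. trans_kernel M X t x"])
    fix x
    have [measurable]: "X x t \<in> borel_measurable M"
      using X[of x] \<open>t > 0\<close> by (simp add: solves_N_def)
    have "{\<omega> \<in> space M. X x t \<omega> \<in> A} \<subseteq> {\<omega> \<in> space M. X x t \<omega> \<in> L}"
      by (auto simp: A_def L_def)
    then show "trans_kernel M X t x A \<le> trans_kernel M X t x L"
      unfolding trans_kernel_def by (rule emeasure_mono) measurable
  next
    fix x assume "x \<in> L"
    then obtain y where x: "x = (0, y)" by (auto simp: L_def)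
    show "trans_kernel M X t x A \<le> ennreal (2 * R / (sqrt (2 * D) * sqrt t))"
      unfolding x A_def using \<open>D > 0\<close> \<open>t > 0\<close> \<open>R \<ge> 0\<close>
      by (rule trans_kernel_from_axis_segment_le[where X = X, OF _ W X[of "(0, y)"]])
    show "trans_kernel M X t x L = 1"
      using trans_kernel_from_axis[where X = X, OF W X[of "(0, y)"] _ borel(1)] \<open>t > 0\<close>
      by (simp add: x L_def M.emeasure_space_1)
  qed (use inv le_1 \<open>t > 0\<close> \<open>D > 0\<close> \<open>R \<ge> 0\<close> in
      \<open>auto simp: invariant_prob_def \<mu>.finite_measure_axioms\<close>)
  also have "\<dots> \<le> 2 * R / (sqrt (2 * D) * sqrt t)"
    using \<open>R \<ge> 0\<close> \<open>t > 0\<close> \<open>D > 0\<close> by (intro mult_left_le \<mu>.prob_le_1) simp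
  finally show ?thesis unfolding A_def .
qed

lemma invariant_prob_axis_segment_null:
  assumes "D > 0" and "std_wiener M W" and "\<And>x. solves_N \<delta> \<gamma> D M W x (X x)"
    and "invariant_prob M X \<mu>" and "R \<ge> 0"
  shows "emeasure \<mu> ({0} \<times> {-R..R}) = 0"
proof -
  interpret \<mu>: prob_space \<mu> using assms(4) unfolding invariant_prob_def by blast
  have "measure \<mu> ({0} \<times> {-R..R}) \<le> 0"
  proof (rule field_le_epsilon)
    fix e :: real assume "0 < e"
    have "((\<lambda>t. 2 * R / (sqrt (2 * D) * sqrt t)) \<longlongrightarrow> 0) at_top"
      using \<open>D > 0\<close> by real_asymp
    then have "\<forall>\<^sub>F t in at_top. 0 < t \<and> 2 * R / (sqrt (2 * D) * sqrt t) < min e 1"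
      using \<open>0 < e\<close> by (intro eventually_conj eventually_gt_at_top order_tendstoD(2)) auto
    then obtain t where "0 < t" "2 * R / (sqrt (2 * D) * sqrt t) < min e 1"
      by (auto simp: eventually_at_top_linorder)
    then show "measure \<mu> ({0} \<times> {-R..R}) \<le> 0 + e"
      using invariant_prob_axis_segment_le[OF assms] by fastforce
  qed
  then show ?thesis by (simp add: \<mu>.emeasure_eq_measure measure_le_0_iff)
qed

theorem lemma3:
  fixes \<delta> \<gamma> D :: real
    and M :: "'a measure" and W :: "real \<Rightarrow> 'a \<Rightarrow> real"
    and X :: "real \<times> real \<Rightarrow> real \<Rightarrow> 'a \<Rightarrow> real \<times> real"
    and \<mu> :: "(real \<times> real) measure"
  assumes "\<gamma> > 0" and "D > 0"
    and "std_wiener M W"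
    and "\<And>x. solves_N \<delta> \<gamma> D M W x (X x)"
    and "invariant_prob M X \<mu>"
  shows "emeasure \<mu> ({0} \<times> UNIV) = 0"
proof -
  have "{0} \<times> UNIV = (\<Union>n. {0::real} \<times> {- real n .. real n})"
  proof (intro equalityI subsetI)
    fix x :: "real \<times> real" assume "x \<in> {0} \<times> UNIV"
    moreover obtain n :: nat where "\<bar>snd x\<bar> \<le> real n" using real_arch_simple by blast
    ultimately have "x \<in> {0} \<times> {- real n .. real n}" by (auto simp: abs_le_iff mem_Times_iff)
    then show "x \<in> (\<Union>n. {0} \<times> {- real n .. real n})" by blast
  qed auto
  also have "emeasure \<mu> \<dots> = 0"
    using assms(5) invariant_prob_axis_segment_null[OF assms(2-5)]
    by (intro emeasure_UN_eq_0) (auto simp: invariant_prob_def intro!: borel_closed closed_Times)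
  finally show ?thesis .
qed

end
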